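(* For every integer $k\ge 2$, the generating function of the number of edges of the $k$-Pell graphs $\Pi_{n,k}$ is $$\sum_{n\geq 0}|E(\Pi_{n,k})|\,t^{n}=\frac{(k-1+t)\,t}{(1-kt-t^{2})^{2}}.$$
   Context: For an integer $k\ge 2$, a $k$-Pell string is a finite word over the alphabet $\{0,1,\ldots,k-1,kk\}$, i.e. a word over $\{0,1,\ldots,k\}$ in which every maximal run of the letter $k$ has even length. For $n\ge 0$, the $k$-Pell graph $\Pi_{n,k}$ has as vertices all $k$-Pell strings of length $n$ (so $\Pi_{0,k}$ is a single vertex, the empty word), and two vertices are adjacent if one is obtained from the other either by replacing a single letter $i$ by $i+1$ (or vice versa) for some $i\in\{0,1,\ldots,k-2\}$, or by replacing one factor $(k-1)(k-1)$ by $kk$ (or vice versa), in such a way that the resulting string is again a $k$-Pell string. *)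

theory Defs
  imports "HOL-Computational_Algebra.Formal_Power_Series"
begin

definition pell_blocks :: "nat \<Rightarrow> nat list set" where
  "pell_blocks k = {[i] | i. i < k} \<union> {[k, k]}"

text \<open>k-Pell strings of length n: words over {0,...,k-1,kk}, written out over {0,...,k}.\<close>
definition pell_strings :: "nat \<Rightarrow> nat \<Rightarrow> nat list set" where
  "pell_strings n k =
     {concat bs | bs. set bs \<subseteq> pell_blocks k \<and> length (concat bs) = n}"

definition pell_step :: "nat \<Rightarrow> nat list \<Rightarrow> nat list \<Rightarrow> bool" where
  "pell_step k u v \<longleftrightarrow>
     (\<exists>i < length u. u ! i + 2 \<le> k \<and> v = u[i := u ! i + 1]) \<or>
     (\<exists>i. Suc i < length u \<and> u ! i = k - 1 \<and> u ! Suc i = k - 1 \<and>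
          v = u[i := k, Suc i := k])"

definition pell_adj :: "nat \<Rightarrow> nat list \<Rightarrow> nat list \<Rightarrow> bool" where
  "pell_adj k u v \<longleftrightarrow> pell_step k u v \<or> pell_step k v u"

definition pell_edges :: "nat \<Rightarrow> nat \<Rightarrow> nat list set set" where
  "pell_edges n k =
     {{u, v} | u v. u \<in> pell_strings n k \<and> v \<in> pell_strings n k \<and> pell_adj k u v}"

end

theory Submission
  imports Defs
begin

unbundle fps_syntax

text \<open>Orient each edge as an elementary move; moves strictly increase the digit sum, so
  every edge has exactly one orientation. Let \<open>p n\<close> count the Pell strings and \<open>e n\<close> the
  moves between Pell strings of length \<open>n\<close>. Looking at the first blocks of both ends, a move
  either happens behind a common first block, or turns a leading letter \<open>i < k - 1\<close> into
  \<open>i + 1\<close>, or turns a leading \<open>(k-1)(k-1)\<close> into \<open>kk\<close>. Hence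
  \<open>p (n+2) = k p (n+1) + p n\<close> and \<open>e (n+2) = k e (n+1) + e n + (k-1) p (n+1) + p n\<close>, i.e.
  with \<open>Q = 1 - k t - t\<^sup>2\<close> the generating functions satisfy \<open>P Q = 1\<close> and
  \<open>E Q = ((k-1) t + t\<^sup>2) P\<close>.\<close>

fun is_pell_word :: "nat \<Rightarrow> nat list \<Rightarrow> bool" where
  "is_pell_word k [] = True"
| "is_pell_word k [a] = (a < k)"
| "is_pell_word k (a # b # w) =
     (a < k \<and> is_pell_word k (b # w) \<or> a = k \<and> b = k \<and> is_pell_word k w)"

lemma is_pell_word_Cons:
  "is_pell_word k (a # w) \<longleftrightarrow>
     a < k \<and> is_pell_word k w \<or> a = k \<and> (\<exists>w'. w = k # w' \<and> is_pell_word k w')"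
  by (cases w) auto

lemma is_pell_word_concat: "set bs \<subseteq> pell_blocks k \<Longrightarrow> is_pell_word k (concat bs)"
  by (induction bs) (auto simp: pell_blocks_def is_pell_word_Cons)

lemma is_pell_word_imp_concat:
  "is_pell_word k w \<Longrightarrow> \<exists>bs. set bs \<subseteq> pell_blocks k \<and> concat bs = w"
proof (induction k w rule: is_pell_word.induct)
  case (1 k)
  show ?case by (intro exI[of _ "[]"]) simp
next
  case (2 k a)
  then show ?case by (intro exI[of _ "[[a]]"]) (auto simp: pell_blocks_def)
next
  case (3 k a b w)
  show ?case
  proof (cases "a < k \<and> is_pell_word k (b # w)")
    case True
    with "3.IH"(1) obtain bs where "set bs \<subseteq> pell_blocks k" "concat bs = b # w"
      by blast
    with True show ?thesis by (intro exI[of _ "[a] # bs"]) (auto simp: pell_blocks_def)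
  next
    case False
    with "3.prems" have "a = k" "b = k" "is_pell_word k w" by auto
    with "3.IH"(2) obtain bs where "set bs \<subseteq> pell_blocks k" "concat bs = w"
      by blast
    with \<open>a = k\<close> \<open>b = k\<close> show ?thesis
      by (intro exI[of _ "[k, k] # bs"]) (auto simp: pell_blocks_def)
  qed
qed

lemma pell_strings_iff: "w \<in> pell_strings n k \<longleftrightarrow> is_pell_word k w \<and> length w = n"
  unfolding pell_strings_def using is_pell_word_concat is_pell_word_imp_concat by blast

lemma set_is_pell_word: "is_pell_word k w \<Longrightarrow> set w \<subseteq> {..k}"
  by (induction k w rule: is_pell_word.induct) auto

lemma finite_pell_strings: "finite (pell_strings n k)"
proof (rule finite_subset)
  show "pell_strings n k \<subseteq> {w. set w \<subseteq> {..k} \<and> length w = n}"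
    using set_is_pell_word pell_strings_iff by blast
qed (simp add: finite_lists_length_eq)

lemma pell_strings_0: "pell_strings 0 k = {[]}"
  by (auto simp: pell_strings_iff)

lemma pell_strings_1: "pell_strings (Suc 0) k = (\<lambda>i. [i]) ` {..<k}"
  by (auto simp: pell_strings_iff length_Suc_conv)

lemma pell_strings_Suc_Suc:
  "pell_strings (Suc (Suc n)) k =
     (\<lambda>(i, w). i # w) ` ({..<k} \<times> pell_strings (Suc n) k) \<union>
     (\<lambda>w. k # k # w) ` pell_strings n k"
proof (intro set_eqI iffI)
  fix u
  assume "u \<in> pell_strings (Suc (Suc n)) k"
  then obtain a w where "u = a # w" "is_pell_word k (a # w)" "length w = Suc n"
    by (auto simp: pell_strings_iff length_Suc_conv)
  then show "u \<in> (\<lambda>(i, w). i # w) ` ({..<k} \<times> pell_strings (Suc n) k) \<union>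
     (\<lambda>w. k # k # w) ` pell_strings n k"
    by (force simp: pell_strings_iff is_pell_word_Cons)
qed (auto simp: pell_strings_iff is_pell_word_Cons)

lemma card_pell_strings_Suc_Suc:
  "card (pell_strings (Suc (Suc n)) k) =
     k * card (pell_strings (Suc n) k) + card (pell_strings n k)"
proof -
  have "card ((\<lambda>(i, w). i # w) ` ({..<k} \<times> pell_strings (Suc n) k)) =
      k * card (pell_strings (Suc n) k)"
    by (subst card_image) (auto simp: inj_on_def card_cartesian_product)
  moreover have "card ((\<lambda>w. k # k # w) ` pell_strings n k) = card (pell_strings n k)"
    by (subst card_image) (auto simp: inj_on_def)
  ultimately show ?thesis
    unfolding pell_strings_Suc_Suc by (subst card_Un_disjoint) (auto simp: finite_pell_strings)
qed

lemma length_pell_step: "pell_step k u v \<Longrightarrow> length v = length u"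
  by (auto simp: pell_step_def)

lemma not_pell_step_Nil: "\<not> pell_step k [] v"
  by (auto simp: pell_step_def)

lemma pell_step_Cons:
  "pell_step k (a # u) (b # v) \<longleftrightarrow>
     a = b \<and> pell_step k u v \<or> u = v \<and> a + 2 \<le> k \<and> b = Suc a \<or>
     a = k - 1 \<and> b = k \<and> (\<exists>w. u = (k - 1) # w \<and> v = k # w)"
  unfolding pell_step_def by (cases u) (auto simp: Ex_less_Suc2)

lemma pell_step_sum_list_less: "k \<ge> 1 \<Longrightarrow> pell_step k u v \<Longrightarrow> sum_list u < sum_list v"
proof (induction u arbitrary: v)
  case Nil
  then show ?case by (simp add: not_pell_step_Nil)
next
  case (Cons a u)
  then obtain b v' where "v = b # v'"
    by (metis length_Suc_conv length_pell_step)
  with Cons show ?case by (auto simp: pell_step_Cons)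
qed

lemma pell_step_Cons_same:
  "k \<ge> 1 \<Longrightarrow> pell_step k (a # u) (a # v) \<longleftrightarrow> pell_step k u v"
  by (auto simp: pell_step_Cons)

definition pell_arcs :: "nat \<Rightarrow> nat \<Rightarrow> (nat list \<times> nat list) set" where
  "pell_arcs n k = {(u, v). u \<in> pell_strings n k \<and> v \<in> pell_strings n k \<and> pell_step k u v}"

lemma finite_pell_arcs: "finite (pell_arcs n k)"
  unfolding pell_arcs_def
  by (rule finite_subset[of _ "pell_strings n k \<times> pell_strings n k"])
     (auto simp: finite_pell_strings)

lemma card_pell_edges:
  assumes "k \<ge> 1"
  shows "card (pell_edges n k) = card (pell_arcs n k)"
proof -
  have "pell_edges n k = (\<lambda>(u, v). {u, v}) ` pell_arcs n k"
    unfolding pell_edges_def pell_arcs_def pell_adj_def by (auto simp: insert_commute)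
  moreover have "inj_on (\<lambda>(u, v). {u, v}) (pell_arcs n k)"
  proof (rule inj_onI, clarify)
    fix u v u' v'
    assume "(u, v) \<in> pell_arcs n k" "(u', v') \<in> pell_arcs n k" "{u, v} = {u', v'}"
    then have "pell_step k u v" "pell_step k u' v'" "u = u' \<and> v = v' \<or> u = v' \<and> v = u'"
      unfolding pell_arcs_def doubleton_eq_iff by auto
    then show "u = u' \<and> v = v'"
      using pell_step_sum_list_less[OF assms] by (metis less_asym)
  qed
  ultimately show ?thesis by (simp add: card_image)
qed

lemma pell_arcs_0: "pell_arcs 0 k = {}"
  by (auto simp: pell_arcs_def pell_strings_0 not_pell_step_Nil)

lemma pell_arcs_1: "pell_arcs (Suc 0) k = (\<lambda>i. ([i], [Suc i])) ` {..<k - 1}"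
  by (auto simp: pell_arcs_def pell_strings_1 pell_step_Cons not_pell_step_Nil)

lemma pell_arcs_Suc_Suc:
  assumes "k \<ge> 1"
  shows "pell_arcs (Suc (Suc n)) k =
     (\<lambda>(i, u, v). (i # u, i # v)) ` ({..<k} \<times> pell_arcs (Suc n) k) \<union>
     (\<lambda>(u, v). (k # k # u, k # k # v)) ` pell_arcs n k \<union>
     (\<lambda>(i, w). (i # w, Suc i # w)) ` ({..<k - 1} \<times> pell_strings (Suc n) k) \<union>
     (\<lambda>w. ((k - 1) # (k - 1) # w, k # k # w)) ` pell_strings n k"
    (is "_ = ?A \<union> ?B \<union> ?C \<union> ?E")
proof (intro set_eqI iffI)
  fix x
  assume "x \<in> pell_arcs (Suc (Suc n)) k"
  then obtain a u b v where x: "x = (a # u, b # v)"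
    and u: "a # u \<in> pell_strings (Suc (Suc n)) k"
    and v: "b # v \<in> pell_strings (Suc (Suc n)) k"
    and step: "pell_step k (a # u) (b # v)"
    unfolding pell_arcs_def pell_strings_iff by (auto simp: length_Suc_conv)
  from step consider
      (tail) "a = b" "pell_step k u v"
    | (head) "u = v" "a + 2 \<le> k" "b = Suc a"
    | (block) w where "a = k - 1" "b = k" "u = (k - 1) # w" "v = k # w"
    unfolding pell_step_Cons by blast
  then show "x \<in> ?A \<union> ?B \<union> ?C \<union> ?E"
  proof cases
    case tail
    show ?thesis
    proof (cases "a < k")
      case True
      with tail u v have "(a, u, v) \<in> {..<k} \<times> pell_arcs (Suc n) k"
        by (auto simp: pell_arcs_def pell_strings_iff is_pell_word_Cons)
      then have "x \<in> ?A" by (rule rev_image_eqI) (simp add: x tail)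
      then show ?thesis by blast
    next
      case False
      with tail u v obtain u' v' where uv: "a = k" "b = k" "u = k # u'" "v = k # v'"
        and "u' \<in> pell_strings n k" "v' \<in> pell_strings n k"
        by (auto simp: pell_strings_iff is_pell_word_Cons)
      with tail assms have "(u', v') \<in> pell_arcs n k"
        by (auto simp: pell_arcs_def pell_step_Cons_same)
      then have "x \<in> ?B" by (rule rev_image_eqI) (simp add: x uv)
      then show ?thesis by blast
    qed
  next
    case head
    with u have "(a, u) \<in> {..<k - 1} \<times> pell_strings (Suc n) k"
      by (auto simp: pell_strings_iff is_pell_word_Cons)
    then have "x \<in> ?C" by (rule rev_image_eqI) (simp add: x head)
    then show ?thesis by blast
  next
    case (block w)
    with v have "w \<in> pell_strings n k"
      by (auto simp: pell_strings_iff is_pell_word_Cons)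
    then have "x \<in> ?E" by (rule rev_image_eqI) (simp add: x block)
    then show ?thesis by blast
  qed
next
  fix x
  assume "x \<in> ?A \<union> ?B \<union> ?C \<union> ?E"
  with assms show "x \<in> pell_arcs (Suc (Suc n)) k"
    by (elim UnE imageE)
       (auto simp: pell_arcs_def pell_strings_iff is_pell_word_Cons pell_step_Cons)
qed

lemma card_pell_arcs_Suc_Suc:
  assumes "k \<ge> 1"
  shows "card (pell_arcs (Suc (Suc n)) k) =
     k * card (pell_arcs (Suc n) k) + card (pell_arcs n k) +
     (k - 1) * card (pell_strings (Suc n) k) + card (pell_strings n k)"
proof -
  let ?A = "(\<lambda>(i, u, v). (i # u, i # v)) ` ({..<k} \<times> pell_arcs (Suc n) k)"
  let ?B = "(\<lambda>(u, v). (k # k # u, k # k # v)) ` pell_arcs n k"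
  let ?C = "(\<lambda>(i, w). (i # w, Suc i # w)) ` ({..<k - 1} \<times> pell_strings (Suc n) k)"
  let ?E = "(\<lambda>w. ((k - 1) # (k - 1) # w, k # k # w)) ` pell_strings n k"
  have "card ?A = k * card (pell_arcs (Suc n) k)"
    by (subst card_image) (auto simp: inj_on_def card_cartesian_product)
  moreover have "card ?B = card (pell_arcs n k)"
    by (subst card_image) (auto simp: inj_on_def)
  moreover have "card ?C = (k - 1) * card (pell_strings (Suc n) k)"
    by (subst card_image) (auto simp: inj_on_def card_cartesian_product)
  moreover have "card ?E = card (pell_strings n k)"
    by (subst card_image) (auto simp: inj_on_def)
  moreover have "card (?A \<union> ?B \<union> ?C \<union> ?E) = card ?A + card ?B + card ?C + card ?E"
  proof -
    have "?A \<inter> ?B = {}" "(?A \<union> ?B) \<inter> ?C = {}" "(?A \<union> ?B \<union> ?C) \<inter> ?E = {}"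
      using assms by auto
    then show ?thesis
      by (simp add: card_Un_disjoint finite_pell_arcs finite_pell_strings)
  qed
  ultimately show ?thesis
    unfolding pell_arcs_Suc_Suc[OF assms] by presburger
qed

definition pell_denom :: "'a::comm_ring_1 \<Rightarrow> 'a fps" where
  "pell_denom c = 1 - fps_const c * fps_X - fps_X ^ 2"

lemma fps_times_pell_denom_nth:
  "(f * pell_denom c) $ n =
     f $ n - c * (if n = 0 then 0 else f $ (n - 1)) - (if n < 2 then 0 else f $ (n - 2))"
proof -
  have "f * pell_denom c = f - fps_const c * (f * fps_X) - f * fps_X ^ 2"
    by (simp add: pell_denom_def algebra_simps)
  then show ?thesis
    by (simp add: fps_X_power_mult_right_nth del: power_Suc)
qed

lemma Abs_fps_times_pell_denom:
  assumes "a 0 = g $ 0" "a 1 = c * a 0 + g $ 1"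
    and "\<And>n. a (Suc (Suc n)) = c * a (Suc n) + a n + g $ Suc (Suc n)"
  shows "Abs_fps a * pell_denom c = g"
proof (rule fps_ext)
  fix n
  show "(Abs_fps a * pell_denom c) $ n = g $ n"
    unfolding fps_times_pell_denom_nth using assms by (cases n; cases "n - 1") auto
qed

lemma pell_strings_fps_times_pell_denom:
  "Abs_fps (\<lambda>n. of_nat (card (pell_strings n k))) * pell_denom (of_nat k) =
     (1 :: 'a::comm_ring_1 fps)"
  by (rule Abs_fps_times_pell_denom)
     (simp_all add: pell_strings_0 pell_strings_1 card_image inj_on_def card_pell_strings_Suc_Suc)

lemma pell_arcs_fps_times_pell_denom:
  assumes "k \<ge> 1"
  shows "Abs_fps (\<lambda>n. of_nat (card (pell_arcs n k))) * pell_denom (of_nat k) =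
     ((fps_const (of_nat k - 1) + fps_X) * fps_X *
       Abs_fps (\<lambda>n. of_nat (card (pell_strings n k))) :: 'a::comm_ring_1 fps)"
    (is "_ = ?N * ?P")
proof (rule Abs_fps_times_pell_denom)
  have "?N * ?P = fps_const (of_nat k - 1) * (?P * fps_X) + ?P * fps_X ^ 2"
    by (simp add: algebra_simps power2_eq_square)
  then have NP: "(?N * ?P) $ n =
      (of_nat k - 1) * (if n = 0 then 0 else of_nat (card (pell_strings (n - 1) k))) +
      (if n < 2 then 0 else of_nat (card (pell_strings (n - 2) k)))" for n
    by (simp add: fps_X_power_mult_right_nth del: power_Suc)
  have "of_nat (k - 1) = (of_nat k - 1 :: 'a)"
    using assms by (simp add: of_nat_diff)
  then show "of_nat (card (pell_arcs 0 k)) = (?N * ?P) $ 0"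
    and "of_nat (card (pell_arcs 1 k)) = of_nat k * of_nat (card (pell_arcs 0 k)) + (?N * ?P) $ 1"
    and "of_nat (card (pell_arcs (Suc (Suc n)) k)) =
      of_nat k * of_nat (card (pell_arcs (Suc n) k)) + of_nat (card (pell_arcs n k)) +
      (?N * ?P) $ Suc (Suc n)" for n
    using assms
    by (simp_all add: NP pell_arcs_0 pell_arcs_1 card_image inj_on_def pell_strings_0
        card_pell_arcs_Suc_Suc)
qed

theorem proposition3p1:
  fixes k :: nat
  assumes "k \<ge> 2"
  shows "(Abs_fps (\<lambda>n. of_nat (card (pell_edges n k))) :: rat fps) =
         (fps_const (of_nat k - 1) + fps_X) * fps_X /
         (1 - fps_const (of_nat k) * fps_X - fps_X ^ 2) ^ 2"
proof -
  define Q :: "rat fps" where "Q = pell_denom (of_nat k)"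
  define N :: "rat fps" where "N = (fps_const (of_nat k - 1) + fps_X) * fps_X"
  define P :: "rat fps" where "P = Abs_fps (\<lambda>n. of_nat (card (pell_strings n k)))"
  define E :: "rat fps" where "E = Abs_fps (\<lambda>n. of_nat (card (pell_edges n k)))"
  from assms have "E * Q = N * P"
    unfolding E_def Q_def N_def P_def
    by (simp add: card_pell_edges pell_arcs_fps_times_pell_denom)
  then have "E * Q ^ 2 = N * (P * Q)"
    by (simp add: power2_eq_square algebra_simps)
  also have "P * Q = 1"
    unfolding P_def Q_def by (rule pell_strings_fps_times_pell_denom)
  finally have "E * Q ^ 2 = N" by simp
  moreover have "Q $ 0 = 1"
    by (simp add: Q_def pell_denom_def)
  then have "Q ^ 2 \<noteq> 0"
    by auto
  ultimately have "E = N / Q ^ 2"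
    by (metis nonzero_mult_div_cancel_right)
  then show ?thesis
    unfolding E_def N_def Q_def pell_denom_def .
qed

end
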